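(* Let $q$ be a prime power, let $d \ge 1$ be a fixed integer, and let $f:\mathbb{F}_q^n \rightarrow \mathbb{F}_q$ be an unknown multilinear polynomial of degree $d$ over $\mathbb{F}_q$. Then any quantum query algorithm which learns $f$ with bounded error (i.e. outputs $f$ with probability at least a fixed constant, e.g. $2/3$, for every such $f$) must make $\Omega(n^{d-1})$ queries to $f$.
   Context: $\mathbb{F}_q$ denotes the finite field with $q$ elements. A function $f:\mathbb{F}_q^n \rightarrow \mathbb{F}_q$ is a multilinear polynomial of degree $d$ if it can be written as $f(x) = \sum_{S \subseteq [n],|S|\le d} \alpha_S \prod_{i \in S} x_i$ for some coefficients $\alpha_S \in \mathbb{F}_q$, where $[n]=\{1,\dots,n\}$ and the empty product equals $1$. In the quantum query model, the algorithm accesses $f$ only via the unitary oracle $O_f \ket{x}\ket{y} = \ket{x}\ket{y + f(x)}$ for $x \in \mathbb{F}_q^n$, $y \in \mathbb{F}_q$ (interleaved with arbitrary oracle-independent unitaries and a final measurement); the number of queries is the number of applications of $O_f$. To learn $f$ means to output (a description of) $f$, i.e. all its coefficients $\alpha_S$. *)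

theory Defs
  imports Complex_Main
begin

(* Finite field F_q: a type 'a of class {finite, field}; q = CARD('a).
  Vectors in F_q^n: functions nat \<Rightarrow> 'a vanishing outside {0..<n}. *)

definition vecs :: "nat \<Rightarrow> (nat \<Rightarrow> 'a::zero) set" where
  "vecs n = {x. \<forall>i\<ge>n. x i = 0}"

definition ml_sets :: "nat \<Rightarrow> nat \<Rightarrow> nat set set" where
  "ml_sets n d = {S. S \<subseteq> {..<n} \<and> card S \<le> d}"

definition ml_coeffs :: "nat \<Rightarrow> nat \<Rightarrow> (nat set \<Rightarrow> 'a::zero) set" where
  "ml_coeffs n d = {\<alpha>. \<forall>S. S \<notin> ml_sets n d \<longrightarrow> \<alpha> S = 0}"

definition ml_eval :: "nat \<Rightarrow> nat \<Rightarrow> (nat set \<Rightarrow> 'a::comm_ring_1) \<Rightarrow> (nat \<Rightarrow> 'a) \<Rightarrow> 'a" where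
  "ml_eval n d \<alpha> x = (\<Sum>S\<in>ml_sets n d. \<alpha> S * (\<Prod>i\<in>S. x i))"

(* Computational basis: |x, y, w> with x \<in> F_q^n (query register), y \<in> F_q (answer
  register), w < m (workspace of arbitrary finite dimension m). *)
type_synonym 'a qbasis = "(nat \<Rightarrow> 'a) \<times> 'a \<times> nat"
type_synonym 'a qstate = "'a qbasis \<Rightarrow> complex"
type_synonym 'a qmat = "'a qbasis \<Rightarrow> 'a qbasis \<Rightarrow> complex"

definition qbasis :: "nat \<Rightarrow> nat \<Rightarrow> ('a::zero) qbasis set" where
  "qbasis n m = {(x, y, w). x \<in> vecs n \<and> w < m}"

definition apply_mat :: "('a::zero) qbasis set \<Rightarrow> 'a qmat \<Rightarrow> 'a qstate \<Rightarrow> 'a qstate" where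
  "apply_mat B U v = (\<lambda>b. \<Sum>b'\<in>B. U b b' * v b')"

definition unitary_on :: "('a::zero) qbasis set \<Rightarrow> 'a qmat \<Rightarrow> bool" where
  "unitary_on B U \<longleftrightarrow> (\<forall>b1\<in>B. \<forall>b2\<in>B.
      (\<Sum>b\<in>B. cnj (U b b1) * U b b2) = (if b1 = b2 then 1 else 0))"

(* Query operator O_f |x,y,w> = |x, y + f x, w>, acting on amplitude functions. *)
definition query_op :: "((nat \<Rightarrow> 'a) \<Rightarrow> 'a) \<Rightarrow> ('a::ab_group_add) qstate \<Rightarrow> 'a qstate" where
  "query_op f v = (\<lambda>(x, y, w). v (x, y - f x, w))"

definition init_state :: "('a::zero) qstate" where
  "init_state = (\<lambda>b. if b = ((\<lambda>_. 0), 0, 0) then 1 else 0)"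

fun run_alg :: "('a::ab_group_add) qbasis set \<Rightarrow> (nat \<Rightarrow> 'a qmat) \<Rightarrow> ((nat \<Rightarrow> 'a) \<Rightarrow> 'a)
                 \<Rightarrow> nat \<Rightarrow> 'a qstate" where
  "run_alg B U f 0 = apply_mat B (U 0) init_state"
| "run_alg B U f (Suc k) = apply_mat B (U (Suc k)) (query_op f (run_alg B U f k))"

definition out_prob :: "('a::ab_group_add) qbasis set \<Rightarrow> (nat \<Rightarrow> 'a qmat) \<Rightarrow> nat
     \<Rightarrow> ('a qbasis \<Rightarrow> 'r) \<Rightarrow> ((nat \<Rightarrow> 'a) \<Rightarrow> 'a) \<Rightarrow> 'r \<Rightarrow> real" where
  "out_prob B U T out f r = (\<Sum>b\<in>{b\<in>B. out b = r}. (cmod (run_alg B U f T b))\<^sup>2)"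

definition learns :: "nat \<Rightarrow> nat \<Rightarrow> nat \<Rightarrow> nat \<Rightarrow> (nat \<Rightarrow> ('a::{finite,field}) qmat)
                      \<Rightarrow> ('a qbasis \<Rightarrow> (nat set \<Rightarrow> 'a)) \<Rightarrow> bool" where
  "learns n d m T U out \<longleftrightarrow> m \<ge> 1 \<and> (\<forall>k\<le>T. unitary_on (qbasis n m) (U k)) \<and>
     (\<forall>\<alpha>\<in>ml_coeffs n d. out_prob (qbasis n m) U T out (ml_eval n d \<alpha>) \<alpha> \<ge> 2/3)"

end

theory Submission
  imports Defs "HOL-Analysis.Convex"
begin

text \<open>Expanding the final state along the \<open>q^(nT)\<close> possible sequences of query registers writes
  it as a sum of branch states, one for each record of queries and oracle answers. Each branch state
  has norm at most 1, because the unitaries preserve the norm and the branch of a query is a shifted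
  projection. By Cauchy--Schwarz, the success probabilities summed over all \<open>q^N\<close> coefficient
  vectors (\<open>N\<close> the number of monomials of degree at most \<open>d\<close>) are at most \<open>q^(nT)\<close> times the
  number \<open>q^((n+1)T)\<close> of records. Success probability \<open>2/3\<close> thus forces \<open>N \<le> (2n+1)T\<close>,
  while \<open>N \<ge> (n choose d) \<ge> (n/d)^d\<close>.\<close>

lemma bij_betw_restrict_vanishing_outside:
  "bij_betw (\<lambda>x. restrict x A) {x :: 'b \<Rightarrow> 'a::zero. \<forall>i. i \<notin> A \<longrightarrow> x i = 0}
     (PiE A (\<lambda>_. UNIV))"
proof (rule bij_betwI')
  fix x y :: "'b \<Rightarrow> 'a"
  assume "x \<in> {x. \<forall>i. i \<notin> A \<longrightarrow> x i = 0}" "y \<in> {x. \<forall>i. i \<notin> A \<longrightarrow> x i = 0}"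
  then show "(restrict x A = restrict y A) = (x = y)"
    by (auto simp: fun_eq_iff restrict_def) metis
next
  fix g assume "g \<in> PiE A (\<lambda>_. UNIV :: 'a set)"
  then show "\<exists>x\<in>{x. \<forall>i. i \<notin> A \<longrightarrow> x i = 0}. g = restrict x A"
    by (intro bexI[of _ "\<lambda>i. if i \<in> A then g i else 0"]) (auto simp: PiE_iff extensional_def)
qed simp

lemma
  fixes A :: "'b set"
  assumes "finite A"
  shows finite_vanishing_outside: "finite {x :: 'b \<Rightarrow> 'a::{finite,zero}. \<forall>i. i \<notin> A \<longrightarrow> x i = 0}"
    and card_vanishing_outside:
      "card {x :: 'b \<Rightarrow> 'a::{finite,zero}. \<forall>i. i \<notin> A \<longrightarrow> x i = 0} = card (UNIV :: 'a set) ^ card A"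
proof -
  note bij = bij_betw_restrict_vanishing_outside[of A, where 'a='a]
  show "finite {x :: 'b \<Rightarrow> 'a. \<forall>i. i \<notin> A \<longrightarrow> x i = 0}"
    using bij_betw_finite[OF bij] assms by (simp add: finite_PiE)
  show "card {x :: 'b \<Rightarrow> 'a. \<forall>i. i \<notin> A \<longrightarrow> x i = 0} = card (UNIV :: 'a set) ^ card A"
    unfolding bij_betw_same_card[OF bij] card_PiE[OF assms] prod_constant ..
qed

lemma vecs_vanishing_outside: "vecs n = {x. \<forall>i. i \<notin> {..<n} \<longrightarrow> x i = 0}"
  by (auto simp: vecs_def not_less)

lemma finite_vecs: "finite (vecs n :: (nat \<Rightarrow> 'a::{finite,zero}) set)"
  unfolding vecs_vanishing_outside by (rule finite_vanishing_outside) simp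

lemma card_vecs: "card (vecs n :: (nat \<Rightarrow> 'a::{finite,zero}) set) = card (UNIV :: 'a set) ^ n"
  unfolding vecs_vanishing_outside by (subst card_vanishing_outside) simp_all

lemma finite_ml_sets: "finite (ml_sets n d)"
  by (rule finite_subset[of _ "Pow {..<n}"]) (auto simp: ml_sets_def)

lemma finite_ml_coeffs: "finite (ml_coeffs n d :: (nat set \<Rightarrow> 'a::{finite,zero}) set)"
  unfolding ml_coeffs_def by (rule finite_vanishing_outside[OF finite_ml_sets])

lemma card_ml_coeffs:
  "card (ml_coeffs n d :: (nat set \<Rightarrow> 'a::{finite,zero}) set) = card (UNIV :: 'a set) ^ card (ml_sets n d)"
  unfolding ml_coeffs_def by (rule card_vanishing_outside[OF finite_ml_sets])

lemma binomial_le_card_ml_sets: "n choose d \<le> card (ml_sets n d)"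
proof -
  have "n choose d = card {S. S \<subseteq> {..<n} \<and> card S = d}" by (simp add: n_subsets)
  also have "\<dots> \<le> card (ml_sets n d)"
    by (rule card_mono[OF finite_ml_sets]) (auto simp: ml_sets_def)
  finally show ?thesis .
qed

definition fixed_length_lists :: "'b set \<Rightarrow> nat \<Rightarrow> 'b list set" where
  "fixed_length_lists A t = {xs. set xs \<subseteq> A \<and> length xs = t}"

lemma
  assumes "finite A"
  shows finite_fixed_length_lists: "finite (fixed_length_lists A t)"
    and card_fixed_length_lists: "card (fixed_length_lists A t) = card A ^ t"
  using assms unfolding fixed_length_lists_def
  by (simp_all add: finite_lists_length_eq card_lists_length_eq)

lemma exponent_le_of_two_thirds_power_le:
  fixes q :: real
  assumes "2 \<le> q" and "2/3 * q ^ N \<le> q ^ M"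
  shows "N \<le> M"
proof (rule ccontr)
  assume "\<not> N \<le> M"
  have "2 * q ^ M \<le> q * q ^ M" using assms(1) by (intro mult_right_mono) simp_all
  also have "\<dots> = q ^ Suc M" by simp
  also have "\<dots> \<le> q ^ N" using assms(1) \<open>\<not> N \<le> M\<close> by (intro power_increasing) auto
  finally have "2 * q ^ M \<le> q ^ N" .
  moreover have "0 < q ^ M" using assms(1) by simp
  ultimately show False using assms(2) by linarith
qed

lemma sum_fibres_le_sum:
  fixes G :: "'b \<Rightarrow> real"
  assumes "finite B" and "finite C" and "\<And>b. 0 \<le> G b"
  shows "(\<Sum>c\<in>C. \<Sum>b\<in>{b\<in>B. g b = c}. G b) \<le> (\<Sum>b\<in>B. G b)"
proof -
  have "(\<Sum>c\<in>C. \<Sum>b\<in>{b\<in>B. g b = c}. G b) = (\<Sum>b\<in>{b\<in>B. g b \<in> C}. G b)"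
    using assms(1,2) by (subst sum.group[symmetric, where g = g and T = C]) (auto intro!: sum.cong)
  also have "\<dots> \<le> (\<Sum>b\<in>B. G b)"
    using assms by (intro sum_mono2) auto
  finally show ?thesis .
qed

lemma card_UNIV_field_ge_2: "2 \<le> card (UNIV :: ('a::{finite,field}) set)"
proof -
  have "card {0, 1 :: 'a} \<le> card (UNIV :: 'a set)" by (rule card_mono) simp_all
  then show ?thesis by simp
qed

definition sq_norm_on :: "'b set \<Rightarrow> ('b \<Rightarrow> complex) \<Rightarrow> real" where
  "sq_norm_on B v = (\<Sum>b\<in>B. (cmod (v b))\<^sup>2)"

lemma of_real_sq_norm_on: "complex_of_real (sq_norm_on B v) = (\<Sum>b\<in>B. v b * cnj (v b))"
  unfolding sq_norm_on_def of_real_sum by (simp only: complex_norm_square)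

lemma sq_norm_on_apply_mat:
  assumes "finite B" and "unitary_on B U"
  shows "sq_norm_on B (apply_mat B U v) = sq_norm_on B v"
proof -
  have "complex_of_real (sq_norm_on B (apply_mat B U v))
      = (\<Sum>b\<in>B. (\<Sum>b1\<in>B. U b b1 * v b1) * cnj (\<Sum>b2\<in>B. U b b2 * v b2))"
    by (simp only: of_real_sq_norm_on apply_mat_def)
  also have "\<dots> = (\<Sum>b\<in>B. \<Sum>b2\<in>B. \<Sum>b1\<in>B. v b1 * cnj (v b2) * (cnj (U b b2) * U b b1))"
    by (simp add: sum_distrib_left sum_distrib_right mult_ac)
  also have "\<dots> = (\<Sum>b2\<in>B. \<Sum>b\<in>B. \<Sum>b1\<in>B. v b1 * cnj (v b2) * (cnj (U b b2) * U b b1))"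
    by (rule sum.swap)
  also have "\<dots> = (\<Sum>b2\<in>B. \<Sum>b1\<in>B. \<Sum>b\<in>B. v b1 * cnj (v b2) * (cnj (U b b2) * U b b1))"
    by (intro sum.cong refl sum.swap)
  also have "\<dots> = (\<Sum>b2\<in>B. \<Sum>b1\<in>B. v b1 * cnj (v b2) * (\<Sum>b\<in>B. cnj (U b b2) * U b b1))"
    by (simp add: sum_distrib_left)
  also have "\<dots> = (\<Sum>b2\<in>B. \<Sum>b1\<in>B. v b1 * cnj (v b2) * (if b2 = b1 then 1 else 0))"
    using assms(2) unfolding unitary_on_def by (intro sum.cong refl) simp
  also have "\<dots> = (\<Sum>b1\<in>B. v b1 * cnj (v b1))"
    using assms(1) by (simp add: if_distrib cong: if_cong)
  also have "\<dots> = complex_of_real (sq_norm_on B v)"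
    by (simp only: of_real_sq_norm_on)
  finally show ?thesis by (simp only: of_real_eq_iff)
qed

lemma sq_norm_on_init_state_le: "sq_norm_on B (init_state :: ('a::zero) qstate) \<le> 1"
proof -
  have "sq_norm_on B (init_state :: 'a qstate) = (\<Sum>b\<in>B. if b = ((\<lambda>_. 0), 0, 0) then 1 else 0)"
    unfolding sq_norm_on_def init_state_def by (intro sum.cong) auto
  also have "\<dots> \<le> 1" by (cases "finite B") (auto simp: sum.delta')
  finally show ?thesis .
qed

text \<open>Summing \<open>query_branch x (f x)\<close> over all query registers \<open>x\<close> recovers \<open>query_op f\<close>.\<close>

definition query_branch :: "(nat \<Rightarrow> 'a) \<Rightarrow> 'a \<Rightarrow> ('a::ab_group_add) qstate \<Rightarrow> 'a qstate" where
  "query_branch x a v = (\<lambda>(x', y, w). if x' = x then v (x', y - a, w) else 0)"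

lemma bij_betw_shift_answer_qbasis:
  "bij_betw (\<lambda>(x, y, w). (x, y - a, w)) (qbasis n m) (qbasis n m :: ('a::ab_group_add) qbasis set)"
  by (rule bij_betwI[where g = "\<lambda>(x, y, w). (x, y + a, w)"]) (auto simp: qbasis_def)

lemma sq_norm_on_query_branch_le:
  "sq_norm_on (qbasis n m) (query_branch x a v) \<le> sq_norm_on (qbasis n m) (v :: ('a::ab_group_add) qstate)"
proof -
  let ?shift = "\<lambda>(x :: nat \<Rightarrow> 'a, y :: 'a, w :: nat). (x, y - a, w)"
  have "sq_norm_on (qbasis n m) (query_branch x a v) \<le> (\<Sum>b\<in>qbasis n m. (cmod (v (?shift b)))\<^sup>2)"
    unfolding sq_norm_on_def by (intro sum_mono) (auto simp: query_branch_def)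
  also have "\<dots> = sq_norm_on (qbasis n m) v"
    unfolding sq_norm_on_def by (rule sum.reindex_bij_betw[OF bij_betw_shift_answer_qbasis])
  finally show ?thesis .
qed

lemma finite_qbasis: "finite (qbasis n m :: ('a::{finite,zero}) qbasis set)"
proof (rule finite_subset)
  show "qbasis n m \<subseteq> vecs n \<times> (UNIV :: 'a set) \<times> {..<m}" by (auto simp: qbasis_def)
qed (simp add: finite_vecs)

text \<open>The unnormalised component of the algorithm's state along the record \<open>ks\<close> of queries
  and answers, listed most recent first.\<close>

fun branch_state :: "('a::ab_group_add) qbasis set \<Rightarrow> (nat \<Rightarrow> 'a qmat) \<Rightarrow> ((nat \<Rightarrow> 'a) \<times> 'a) list
    \<Rightarrow> 'a qstate" where
  "branch_state B U [] = apply_mat B (U 0) init_state"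
| "branch_state B U ((x, a) # ks) = apply_mat B (U (Suc (length ks))) (query_branch x a (branch_state B U ks))"

lemma sq_norm_on_branch_state_le:
  assumes "length ks \<le> T" and "\<forall>k\<le>T. unitary_on (qbasis n m) (U k)"
  shows "sq_norm_on (qbasis n m) (branch_state (qbasis n m) U ks :: ('a::{finite,ab_group_add}) qstate) \<le> 1"
  using assms(1)
proof (induction ks)
  case Nil
  then show ?case
    using assms(2) sq_norm_on_init_state_le by (simp add: sq_norm_on_apply_mat finite_qbasis)
next
  case (Cons k ks)
  obtain x a where k: "k = (x, a)" by fastforce
  have "unitary_on (qbasis n m) (U (Suc (length ks)))" using Cons.prems assms(2) by simp
  then have "sq_norm_on (qbasis n m) (branch_state (qbasis n m) U (k # ks))
      = sq_norm_on (qbasis n m) (query_branch x a (branch_state (qbasis n m) U ks))"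
    by (simp add: k sq_norm_on_apply_mat finite_qbasis)
  also have "\<dots> \<le> sq_norm_on (qbasis n m) (branch_state (qbasis n m) U ks)"
    by (rule sq_norm_on_query_branch_le)
  also have "\<dots> \<le> 1" using Cons by simp
  finally show ?case .
qed

lemma run_alg_eq_sum_branch_state:
  fixes f :: "(nat \<Rightarrow> 'a::{finite,ab_group_add}) \<Rightarrow> 'a"
  assumes "b \<in> qbasis n m"
  shows "run_alg (qbasis n m) U f t b
    = (\<Sum>xs\<in>fixed_length_lists (vecs n) t. branch_state (qbasis n m) U (zip xs (map f xs)) b)"
  using assms
proof (induction t arbitrary: b)
  case 0
  have "fixed_length_lists (vecs n) 0 = ({[]} :: (nat \<Rightarrow> 'a) list set)"
    by (auto simp: fixed_length_lists_def)
  then show ?case by simp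
next
  case (Suc t)
  let ?B = "qbasis n m :: 'a qbasis set"
  let ?X = "vecs n :: (nat \<Rightarrow> 'a) set"
  let ?L = "fixed_length_lists ?X t"
  let ?W = "\<lambda>xs. branch_state ?B U (zip xs (map f xs))"
  have query: "query_op f (run_alg ?B U f t) b' = (\<Sum>xs\<in>?L. \<Sum>x\<in>?X. query_branch x (f x) (?W xs) b')"
    if "b' \<in> ?B" for b'
  proof -
    obtain x' y w where b': "b' = (x', y, w)" "x' \<in> ?X" "w < m"
      using \<open>b' \<in> ?B\<close> by (auto simp: qbasis_def)
    then have "(x', y - f x', w) \<in> ?B" by (simp add: qbasis_def)
    then have "query_op f (run_alg ?B U f t) b' = (\<Sum>xs\<in>?L. ?W xs (x', y - f x', w))"
      by (simp add: b' query_op_def Suc.IH)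
    also have "\<dots> = (\<Sum>xs\<in>?L. \<Sum>x\<in>?X. query_branch x (f x) (?W xs) b')"
      unfolding b'(1) query_branch_def using b'(2) by (simp add: sum.delta'[OF finite_vecs])
    finally show ?thesis .
  qed
  have "run_alg ?B U f (Suc t) b = (\<Sum>b'\<in>?B. U (Suc t) b b' * query_op f (run_alg ?B U f t) b')"
    by (simp add: apply_mat_def)
  also have "\<dots> = (\<Sum>xs\<in>?L. \<Sum>x\<in>?X. \<Sum>b'\<in>?B. U (Suc t) b b' * query_branch x (f x) (?W xs) b')"
    by (simp add: query sum_distrib_left sum.swap[of _ ?B] cong: sum.cong)
  also have "\<dots> = (\<Sum>(xs, x)\<in>?L \<times> ?X. ?W (x # xs) b)"
    unfolding sum.cartesian_product[symmetric]
    by (intro sum.cong refl) (simp add: fixed_length_lists_def apply_mat_def)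
  also have "\<dots> = (\<Sum>xs\<in>fixed_length_lists ?X (Suc t). ?W xs b)"
    unfolding fixed_length_lists_def lists_length_Suc_eq
    by (subst sum.reindex) (auto simp: inj_split_Cons intro!: sum.cong)
  finally show ?case .
qed

lemma cmod_run_alg_sq_le:
  fixes f :: "(nat \<Rightarrow> 'a::{finite,ab_group_add}) \<Rightarrow> 'a"
  assumes "b \<in> qbasis n m"
  shows "(cmod (run_alg (qbasis n m) U f T b))\<^sup>2
    \<le> real (card (fixed_length_lists (vecs n :: (nat \<Rightarrow> 'a) set) T))
       * (\<Sum>ks\<in>fixed_length_lists (vecs n \<times> UNIV) T. (cmod (branch_state (qbasis n m) U ks b))\<^sup>2)"
proof -
  let ?L = "fixed_length_lists (vecs n :: (nat \<Rightarrow> 'a) set) T"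
  let ?K = "fixed_length_lists ((vecs n :: (nat \<Rightarrow> 'a) set) \<times> (UNIV :: 'a set)) T"
  let ?label = "\<lambda>xs. zip xs (map f xs)"
  let ?a = "\<lambda>ks. cmod (branch_state (qbasis n m) U ks b)"
  have "cmod (run_alg (qbasis n m) U f T b) \<le> (\<Sum>xs\<in>?L. ?a (?label xs))"
    unfolding run_alg_eq_sum_branch_state[OF assms] by (rule norm_sum)
  then have "(cmod (run_alg (qbasis n m) U f T b))\<^sup>2 \<le> (\<Sum>xs\<in>?L. ?a (?label xs))\<^sup>2"
    by (simp add: power_mono)
  also have "\<dots> \<le> real (card ?L) * (\<Sum>xs\<in>?L. (?a (?label xs))\<^sup>2)"
    using sum_squared_le_sum_of_squares[of "\<lambda>xs. ?a (?label xs)" ?L] by (simp add: mult.commute)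
  also have "(\<Sum>xs\<in>?L. (?a (?label xs))\<^sup>2) = (\<Sum>ks\<in>?label ` ?L. (?a ks)\<^sup>2)"
  proof -
    have "inj_on ?label ?L" by (rule inj_onI) (metis map_fst_zip length_map)
    then show ?thesis by (simp add: sum.reindex)
  qed
  also have "\<dots> \<le> (\<Sum>ks\<in>?K. (?a ks)\<^sup>2)"
    by (rule sum_mono2[OF finite_fixed_length_lists])
      (auto simp: finite_vecs fixed_length_lists_def set_zip_leftD)
  finally show ?thesis by (simp add: mult_left_mono)
qed

lemma learns_card_ml_coeffs_le:
  assumes learns: "learns n d m T U (out :: ('a::{finite,field}) qbasis \<Rightarrow> _)"
  shows "2/3 * real (card (ml_coeffs n d :: (nat set \<Rightarrow> 'a) set))
    \<le> real (card (fixed_length_lists (vecs n :: (nat \<Rightarrow> 'a) set) T))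
       * real (card (fixed_length_lists ((vecs n :: (nat \<Rightarrow> 'a) set) \<times> (UNIV :: 'a set)) T))"
proof -
  let ?B = "qbasis n m :: 'a qbasis set"
  let ?C = "ml_coeffs n d :: (nat set \<Rightarrow> 'a) set"
  let ?K = "fixed_length_lists ((vecs n :: (nat \<Rightarrow> 'a) set) \<times> (UNIV :: 'a set)) T"
  let ?cL = "real (card (fixed_length_lists (vecs n :: (nat \<Rightarrow> 'a) set) T))"
  define G where "G b = ?cL * (\<Sum>ks\<in>?K. (cmod (branch_state ?B U ks b))\<^sup>2)" for b
  have "2/3 * real (card ?C) = (\<Sum>\<alpha>\<in>?C. 2/3)" by simp
  also have "\<dots> \<le> (\<Sum>\<alpha>\<in>?C. out_prob ?B U T out (ml_eval n d \<alpha>) \<alpha>)"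
    using learns unfolding learns_def by (intro sum_mono) auto
  also have "\<dots> \<le> (\<Sum>\<alpha>\<in>?C. \<Sum>b\<in>{b\<in>?B. out b = \<alpha>}. G b)"
    unfolding out_prob_def G_def by (intro sum_mono cmod_run_alg_sq_le) simp
  also have "\<dots> \<le> (\<Sum>b\<in>?B. G b)"
    by (rule sum_fibres_le_sum[OF finite_qbasis finite_ml_coeffs]) (simp add: G_def sum_nonneg)
  also have "\<dots> = ?cL * (\<Sum>ks\<in>?K. sq_norm_on ?B (branch_state ?B U ks))"
    unfolding G_def sq_norm_on_def by (simp add: sum_distrib_left sum.swap[of _ ?B])
  also have "\<dots> \<le> ?cL * real (card ?K)"
  proof (rule mult_left_mono)
    have "(\<Sum>ks\<in>?K. sq_norm_on ?B (branch_state ?B U ks)) \<le> (\<Sum>ks\<in>?K. 1)"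
      using learns unfolding learns_def
      by (intro sum_mono, intro sq_norm_on_branch_state_le[where T = T]) (auto simp: fixed_length_lists_def)
    then show "(\<Sum>ks\<in>?K. sq_norm_on ?B (branch_state ?B U ks)) \<le> real (card ?K)" by simp
  qed simp
  finally show ?thesis .
qed

lemma learns_card_ml_sets_le:
  assumes "learns n d m T U (out :: ('a::{finite,field}) qbasis \<Rightarrow> _)"
  shows "card (ml_sets n d) \<le> (2 * n + 1) * T"
proof (rule exponent_le_of_two_thirds_power_le)
  let ?q = "card (UNIV :: 'a set)"
  show "2 \<le> real ?q" using card_UNIV_field_ge_2[where 'a = 'a] by simp
  have "2/3 * real ?q ^ card (ml_sets n d) = 2/3 * real (card (ml_coeffs n d :: (nat set \<Rightarrow> 'a) set))"
    by (simp add: card_ml_coeffs)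
  also have "\<dots> \<le> real (?q ^ n) ^ T * (real (?q ^ n) * real ?q) ^ T"
    using learns_card_ml_coeffs_le[OF assms]
    by (simp add: card_fixed_length_lists finite_vecs card_vecs card_cartesian_product)
  also have "\<dots> = real ?q ^ (n * T) * real ?q ^ ((n + 1) * T)"
    by (simp only: of_nat_power power_Suc2[symmetric] power_mult[symmetric] Suc_eq_plus1)
  also have "\<dots> = real ?q ^ ((2 * n + 1) * T)"
    by (simp add: power_add[symmetric] algebra_simps mult_2_right)
  finally show "2/3 * real ?q ^ card (ml_sets n d) \<le> real ?q ^ ((2 * n + 1) * T)" .
qed

theorem proposition1:
  fixes d :: nat
  assumes "d \<ge> 1"
  shows "\<exists>c::real > 0. \<exists>N::nat. \<forall>n\<ge>N. \<forall>m T (U :: nat \<Rightarrow> ('a::{finite,field}) qmat) out.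
           learns n d m T U out \<longrightarrow> real T \<ge> c * real n ^ (d - 1)"
proof (intro exI[of _ "1 / (3 * real d ^ d)"] conjI exI[of _ d] allI impI)
  show "0 < 1 / (3 * real d ^ d)" using assms by simp
  fix n m T and U :: "nat \<Rightarrow> 'a qmat" and out
  assume "d \<le> n" and "learns n d m T U out"
  have "real n ^ d / real d ^ d \<le> real (n choose d)"
    using binomial_ge_n_over_k_pow_k[OF \<open>d \<le> n\<close>] by (simp add: power_divide)
  also have "\<dots> \<le> real ((2 * n + 1) * T)"
    using binomial_le_card_ml_sets learns_card_ml_sets_le[OF \<open>learns n d m T U out\<close>]
    by (metis of_nat_le_iff order_trans)
  also have "\<dots> = (2 * real n + 1) * real T" by (simp add: algebra_simps)
  also have "\<dots> \<le> real n * (3 * real T)"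
    using \<open>d \<le> n\<close> assms mult_right_mono[of "2 * real n + 1" "3 * real n" "real T"] by simp
  finally have "real n * (real n ^ (d - 1) / real d ^ d) \<le> real n * (3 * real T)"
    using assms by (cases d) simp_all
  then have "real n ^ (d - 1) / real d ^ d \<le> 3 * real T"
    by (rule mult_left_le_imp_le) (use \<open>d \<le> n\<close> assms in simp)
  then show "1 / (3 * real d ^ d) * real n ^ (d - 1) \<le> real T"
    using assms by (simp add: field_simps)
qed

end
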